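(* In the setting of the context, for every $N$-tuple of integers $\mathbf{x}=(x_1,\dots,x_N)$ with $0\le x_p\le \ell_p$, define \[ V(\mathbf{x})=\sum_{\mathbf{n}=\mathbf{x}}^{\boldsymbol{\ell}}\mathscr{C}_{\mathbf{n},\mathbf{x}}V^{\mathbf{n}},\qquad \mathscr{C}_{\mathbf{n},\mathbf{x}}=\frac{(-1)^{|\mathbf{n}|-|\mathbf{x}|}}{(2|\mathbf{x}|+\omega+1)_{|\mathbf{n}|-|\mathbf{x}|}}\prod_{p=1}^N\binom{n_p}{x_p}\big(|\mathbf{n}|_1^{p-1}+|\mathbf{x}|_1^{p}+|\boldsymbol{\ell}|_p^N+a_p+\omega+1\big)_{n_p-x_p}, \] where $\sum_{\mathbf{n}=\mathbf{x}}^{\boldsymbol{\ell}}$ denotes the sum over all $\mathbf{n}$ with $x_p\le n_p\le\ell_p$ for every $p$. Then $A\,V(\mathbf{x})=\theta_{|\mathbf{x}|}V(\mathbf{x})$.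
   Context: Notation: for $N$-tuples $\mathbf{n}=(n_1,\dots,n_N)$ of integers, $|\mathbf{n}|_j^k=\sum_{p=j}^k n_p$ (equal to $0$ if $j>k$), $|\mathbf{n}|=|\mathbf{n}|_1^N$, $\mathbf{e}_p$ is the $p$-th unit $N$-tuple, and tuples are added componentwise. $(x)_k=x(x+1)\cdots(x+k-1)$, $(x)_0=1$. Setting: $N\ge1$, $\boldsymbol{\ell}=(\ell_1,\dots,\ell_N)$ nonnegative integers, $\mathcal{V}=\mathbb{C}^{\ell_1+1}\otimes\cdots\otimes\mathbb{C}^{\ell_N+1}$ with basis $V^{\mathbf{n}}$, $0\le n_p\le\ell_p$; $V^{\mathbf{n}}=0$ if some $n_p<0$ or $n_p>\ell_p$. Fix scalars $\theta_0,\theta_0^\star,h,h^\star,\omega,\omega^\star,a_1,\dots,a_N\in\mathbb{C}$; $\theta_i=\theta_0+hi(i+\omega)$, $\theta^\star_i=\theta^\star_0+h^\star i(i+\omega^\star)$. For $p=1,\dots,N$: $\xi_{\mathbf{n},p}=h(|\mathbf{n}|_1^{p-1}+|\mathbf{n}|_1^p+|\boldsymbol{\ell}|_p^N+a_p+\omega)n_p$, $\xi^\star_{\mathbf{n},p}=h^\star(|\mathbf{n}|_1^{p-1}+|\mathbf{n}|_1^p+|\boldsymbol{\ell}|_{p+1}^N-a_p+\omega^\star)(n_p-\ell_p)$. The operators are $A V^{\mathbf{n}}=\theta_{|\mathbf{n}|}V^{\mathbf{n}}+\sum_{p=1}^N\xi_{\mathbf{n}+\mathbf{e}_p,p}V^{\mathbf{n}+\mathbf{e}_p}$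 and $A^\star V^{\mathbf{n}}=\theta^\star_{|\mathbf{n}|}V^{\mathbf{n}}+\sum_{p=1}^N\xi^\star_{\mathbf{n}-\mathbf{e}_p,p}V^{\mathbf{n}-\mathbf{e}_p}$. Standing constraints: $h,h^\star\neq0$; $\omega,\omega^\star\notin\{-2|\boldsymbol{\ell}|+1,\dots,-1\}$; for each $i$, none of $a_i,\ a_i+\omega-\omega^\star,\ a_i-|\boldsymbol{\ell}|-\omega^\star,\ a_i+|\boldsymbol{\ell}|+\omega$ lies in $\{-\ell_i,\dots,-1\}$; and with $S^\pm(\ell,a)=\{\pm(a+k+\tfrac12(\omega-\omega^\star)):k=1,\dots,\ell\}$, for all $i,j$ and signs $\epsilon_i,\epsilon_j$, $S^{\epsilon_i}(\ell_i,a_i)$ and $S^{\epsilon_j}(\ell_j,a_j)$ are in general position (one contains the other or their union is not a string). *)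

theory Defs
  imports Complex_Main
begin

text \<open>N-tuples are lists of natural numbers of length N; position p (1-based) is
  the list entry at index p-1.  Vectors of the space V are coefficient functions
  nat list => complex supported on the box of index tuples.\<close>

definition tsum :: "nat list \<Rightarrow> nat \<Rightarrow> nat \<Rightarrow> nat" where
  "tsum n j k = (\<Sum>p\<in>{j..k}. n ! (p - 1))"

definition tot :: "nat list \<Rightarrow> nat" where
  "tot n = tsum n 1 (length n)"

definition box :: "nat list \<Rightarrow> nat list set" where
  "box l = {n. length n = length l \<and> (\<forall>i<length l. n ! i \<le> l ! i)}"

definition basisV :: "nat list \<Rightarrow> nat list \<Rightarrow> nat list \<Rightarrow> complex" where
  "basisV l n = (\<lambda>m. if m = n \<and> n \<in> box l then 1 else 0)"

definition unitadd :: "nat list \<Rightarrow> nat \<Rightarrow> nat list" where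
  "unitadd n p = n[p - 1 := n ! (p - 1) + 1]"

definition theta :: "complex \<Rightarrow> complex \<Rightarrow> complex \<Rightarrow> nat \<Rightarrow> complex" where
  "theta \<theta>0 h \<omega> i = \<theta>0 + h * of_nat i * (of_nat i + \<omega>)"

definition xi :: "complex \<Rightarrow> complex \<Rightarrow> complex list \<Rightarrow> nat list \<Rightarrow> nat list \<Rightarrow> nat \<Rightarrow> complex" where
  "xi h \<omega> a l n p = h * (of_nat (tsum n 1 (p - 1)) + of_nat (tsum n 1 p)
      + of_nat (tsum l p (length l)) + a ! (p - 1) + \<omega>) * of_nat (n ! (p - 1))"

definition A_basis :: "complex \<Rightarrow> complex \<Rightarrow> complex \<Rightarrow> complex list \<Rightarrow> nat list \<Rightarrow> nat list
    \<Rightarrow> nat list \<Rightarrow> complex" where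
  "A_basis \<theta>0 h \<omega> a l n = (\<lambda>m. theta \<theta>0 h \<omega> (tot n) * basisV l n m
     + (\<Sum>p\<in>{1..length l}. xi h \<omega> a l (unitadd n p) p * basisV l (unitadd n p) m))"

definition opA :: "complex \<Rightarrow> complex \<Rightarrow> complex \<Rightarrow> complex list \<Rightarrow> nat list
    \<Rightarrow> (nat list \<Rightarrow> complex) \<Rightarrow> nat list \<Rightarrow> complex" where
  "opA \<theta>0 h \<omega> a l v = (\<lambda>m. \<Sum>n\<in>box l. v n * A_basis \<theta>0 h \<omega> a l n m)"

definition coefC :: "complex \<Rightarrow> complex list \<Rightarrow> nat list \<Rightarrow> nat list \<Rightarrow> nat list \<Rightarrow> complex" where
  "coefC \<omega> a l n x =
     (-1) ^ (tot n - tot x) / pochhammer (2 * of_nat (tot x) + \<omega> + 1) (tot n - tot x)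
     * (\<Prod>p\<in>{1..length l}. of_nat ((n ! (p - 1)) choose (x ! (p - 1)))
         * pochhammer (of_nat (tsum n 1 (p - 1)) + of_nat (tsum x 1 p)
              + of_nat (tsum l p (length l)) + a ! (p - 1) + \<omega> + 1)
             (n ! (p - 1) - x ! (p - 1)))"

definition Vx :: "complex \<Rightarrow> complex list \<Rightarrow> nat list \<Rightarrow> nat list \<Rightarrow> nat list \<Rightarrow> complex" where
  "Vx \<omega> a l x = (\<lambda>m. \<Sum>n\<in>{n\<in>box l. \<forall>i<length l. x ! i \<le> n ! i}.
        coefC \<omega> a l n x * basisV l n m)"

definition negrange :: "int \<Rightarrow> complex set" where
  "negrange k = {of_int j | j. - k \<le> j \<and> j \<le> -1}"

definition Sset :: "int \<Rightarrow> nat \<Rightarrow> complex \<Rightarrow> complex \<Rightarrow> complex \<Rightarrow> complex set" where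
  "Sset \<epsilon> m b \<omega> \<omega>s = {of_int \<epsilon> * (b + of_nat k + (\<omega> - \<omega>s) / 2) | k. 1 \<le> k \<and> k \<le> m}"

definition is_string :: "complex set \<Rightarrow> bool" where
  "is_string T = (\<exists>c m. T = {c + of_nat k | k. k \<le> m})"

definition general_position :: "complex set \<Rightarrow> complex set \<Rightarrow> bool" where
  "general_position S T = (S \<subseteq> T \<or> T \<subseteq> S \<or> \<not> is_string (S \<union> T))"

definition standing :: "nat list \<Rightarrow> complex \<Rightarrow> complex \<Rightarrow> complex \<Rightarrow> complex \<Rightarrow> complex list \<Rightarrow> bool" where
  "standing l h hs \<omega> \<omega>s a =
    (length l \<ge> 1 \<and> length a = length l \<and> h \<noteq> 0 \<and> hs \<noteq> 0 \<and>
     \<omega> \<notin> negrange (2 * int (tot l) - 1) \<and> \<omega>s \<notin> negrange (2 * int (tot l) - 1) \<and>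
     (\<forall>i<length l.
        a ! i \<notin> negrange (int (l ! i)) \<and>
        a ! i + \<omega> - \<omega>s \<notin> negrange (int (l ! i)) \<and>
        a ! i - of_nat (tot l) - \<omega>s \<notin> negrange (int (l ! i)) \<and>
        a ! i + of_nat (tot l) + \<omega> \<notin> negrange (int (l ! i))) \<and>
     (\<forall>i<length l. \<forall>j<length l. \<forall>\<epsilon>i\<in>{1,-1}. \<forall>\<epsilon>j\<in>{1,-1}.
        general_position (Sset \<epsilon>i (l ! i) (a ! i) \<omega> \<omega>s) (Sset \<epsilon>j (l ! j) (a ! j) \<omega> \<omega>s)))"

end

theory Submission
  imports Defs
begin

(* Reading off the coefficient of V^m, the claim A V(x) = theta_|x| V(x) says that for every
   m >= x the lowering terms sum_p xi_{m,p} C_{m-e_p,x} equal (theta_|x| - theta_|m|) C_{m,x}.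
   This sum telescopes. Let P_j be the product in C_{m,x} with the Pochhammer bases of all
   positions q > j lowered by one, and F_j = (|m|_1^j - |x|_1^j) P_j. Then the p-th term is
   -h (|x| + |m| + omega) s (F_p - F_(p-1)), where s is the prefactor
   (-1)^(|m|-|x|) / (2|x| + omega + 1)_(|m|-|x|) of C_{m,x}; per position this is binomial
   absorption together with (D + k + 1) (B)_(k+1) - D (B - 1)_(k+1) = (k + 1) (D + B + k) (B)_k.
   As F_0 = 0 and F_N = (|m| - |x|) P_N, the sum is -h (|x| + |m| + omega) (|m| - |x|) C_{m,x},
   which is (theta_|x| - theta_|m|) C_{m,x}. Of the standing constraints only the one on omega
   is needed: it makes |x| + |m| + omega nonzero, so that the prefactor of C_{m-e_p,x} is
   -(|x| + |m| + omega) times the prefactor s of C_{m,x}. *)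

lemma tsum_0 [simp]: "tsum n (Suc 0) 0 = 0"
  by (simp add: tsum_def)

lemma tsum_Suc [simp]: "tsum n (Suc 0) (Suc j) = tsum n (Suc 0) j + n ! j"
  by (simp add: tsum_def)

lemma tsum_mono: "(\<And>i. i < j \<Longrightarrow> x ! i \<le> n ! i) \<Longrightarrow> tsum x 1 j \<le> tsum n 1 j"
  unfolding tsum_def by (intro sum_mono) auto

lemma tot_mono:
  "length x = length n \<Longrightarrow> (\<And>i. i < length n \<Longrightarrow> x ! i \<le> n ! i) \<Longrightarrow> tot x \<le> tot n"
  unfolding tot_def by (metis tsum_mono)

definition unitsub :: "nat list \<Rightarrow> nat \<Rightarrow> nat list" where
  "unitsub n p = n[p - 1 := n ! (p - 1) - 1]"

lemma length_unitsub [simp]: "length (unitsub n p) = length n"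
  by (simp add: unitsub_def)

lemma nth_unitsub:
  "p \<in> {1..length n} \<Longrightarrow> unitsub n p ! i = (if i = p - 1 then n ! i - 1 else n ! i)"
  by (auto simp: unitsub_def nth_list_update)

lemma tsum_unitsub:
  assumes "p \<in> {1..length n}" "0 < n ! (p - 1)"
  shows "tsum (unitsub n p) 1 j + (if p \<le> j then 1 else 0) = tsum n 1 j"
  using assms by (induction j) (auto simp: nth_unitsub split: if_splits)

lemma tot_unitsub:
  "p \<in> {1..length n} \<Longrightarrow> 0 < n ! (p - 1) \<Longrightarrow> tot (unitsub n p) + 1 = tot n"
  using tsum_unitsub[of p n "length n"] by (simp add: tot_def)

lemma of_nat_tsum_unitsub:
  assumes "p \<in> {1..length n}" "0 < n ! (p - 1)"
  shows "(of_nat (tsum (unitsub n p) 1 j) :: 'a::ring_1) = of_nat (tsum n 1 j) - (if p \<le> j then 1 else 0)"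
proof -
  have "tsum n 1 j = tsum (unitsub n p) 1 j + (if p \<le> j then 1 else 0)"
    using tsum_unitsub[OF assms] by simp
  then show ?thesis
    by simp
qed

lemma unitadd_unitsub: "p \<in> {1..length n} \<Longrightarrow> 0 < n ! (p - 1) \<Longrightarrow> unitadd (unitsub n p) p = n"
  by (auto simp: unitadd_def unitsub_def)

lemma unitadd_eq_iff:
  assumes "p \<in> {1..length m}" "length n = length m"
  shows "unitadd n p = m \<longleftrightarrow> n = unitsub m p \<and> 0 < m ! (p - 1)"
proof
  assume "unitadd n p = m"
  with assms show "n = unitsub m p \<and> 0 < m ! (p - 1)"
    by (auto simp: unitadd_def unitsub_def)
qed (use assms unitadd_unitsub in auto)

lemma finite_box: "finite (box l)"
proof -
  have "box l \<subseteq> {n. set n \<subseteq> {0..sum_list l} \<and> length n = length l}"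
    unfolding box_def
    by (auto simp: in_set_conv_nth) (meson elem_le_sum_list order.trans)
  then show ?thesis
    by (rule finite_subset) (simp add: finite_lists_length_eq)
qed

lemma unitsub_in_box: "m \<in> box l \<Longrightarrow> unitsub m p \<in> box l"
  by (cases "p - 1 < length m") (auto simp: box_def unitsub_def nth_list_update intro: le_trans)

section \<open>Coordinates of A and of V(x)\<close>

definition box_from :: "nat list \<Rightarrow> nat list \<Rightarrow> nat list set" where
  "box_from l x = {n \<in> box l. \<forall>i<length l. x ! i \<le> n ! i}"

lemma box_from_subset_box: "box_from l x \<subseteq> box l"
  by (auto simp: box_from_def)

lemma finite_box_from: "finite (box_from l x)"
  using finite_box by (rule finite_subset[OF box_from_subset_box])

lemma unitsub_in_box_from_iff:
  assumes "m \<in> box l" "p \<in> {1..length l}" "0 < m ! (p - 1)"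
  shows "unitsub m p \<in> box_from l x \<longleftrightarrow> m \<in> box_from l x \<and> x ! (p - 1) < m ! (p - 1)"
proof -
  have nth: "unitsub m p ! i = (if i = p - 1 then m ! i - 1 else m ! i)" for i
    using assms by (simp add: box_def nth_unitsub)
  have "(\<forall>i<length l. x ! i \<le> unitsub m p ! i)
      \<longleftrightarrow> (\<forall>i<length l. x ! i \<le> m ! i) \<and> x ! (p - 1) < m ! (p - 1)"
  proof
    assume below: "\<forall>i<length l. x ! i \<le> unitsub m p ! i"
    have "x ! (p - 1) \<le> unitsub m p ! (p - 1)"
      using below assms(2) by auto
    then have strict: "x ! (p - 1) < m ! (p - 1)"
      using assms(3) nth[of "p - 1"] by simp
    moreover have "x ! i \<le> m ! i" if "i < length l" for i
      using below that nth[of i] strict by (cases "i = p - 1") auto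
    ultimately show "(\<forall>i<length l. x ! i \<le> m ! i) \<and> x ! (p - 1) < m ! (p - 1)"
      by blast
  qed (auto simp: nth)
  then show ?thesis
    using assms(1) unitsub_in_box[OF assms(1)] by (simp add: box_from_def)
qed

lemma tot_le_tot_box_from: "x \<in> box l \<Longrightarrow> m \<in> box_from l x \<Longrightarrow> tot x \<le> tot m"
  by (intro tot_mono) (auto simp: box_from_def box_def)

lemma tot_le_tot_box: "m \<in> box l \<Longrightarrow> tot m \<le> tot l"
  by (intro tot_mono) (auto simp: box_def)

lemma tot_less_tot_box_from:
  assumes "x \<in> box l" "m \<in> box_from l x" "p \<in> {1..length l}" "x ! (p - 1) < m ! (p - 1)"
  shows "tot x < tot m"
proof -
  have m: "m \<in> box l" "p \<in> {1..length m}"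
    using assms(2,3) by (auto simp: box_from_def box_def)
  then have "unitsub m p \<in> box_from l x"
    using assms by (simp add: unitsub_in_box_from_iff)
  then have "tot x \<le> tot (unitsub m p)"
    by (rule tot_le_tot_box_from[OF assms(1)])
  then show ?thesis
    using tot_unitsub[OF m(2)] assms(4) by simp
qed

lemma Vx_apply: "Vx \<omega> a l x m = (if m \<in> box_from l x then coefC \<omega> a l m x else 0)"
proof -
  have "Vx \<omega> a l x m = (\<Sum>n\<in>box_from l x. if m = n then coefC \<omega> a l n x else 0)"
    unfolding Vx_def box_from_def[symmetric]
    using box_from_subset_box by (intro sum.cong) (auto simp: basisV_def)
  then show ?thesis
    using finite_box_from by simp
qed

lemma basisV_unitadd:
  assumes "n \<in> box l" "p \<in> {1..length l}"
  shows "basisV l (unitadd n p) m = (if m \<in> box l \<and> 0 < m ! (p - 1) \<and> n = unitsub m p then 1 else 0)"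
  using assms unitadd_eq_iff[of p m n] unitadd_unitsub[of p m]
  by (auto simp: basisV_def box_def)

lemma opA_apply:
  "opA \<theta>0 h \<omega> a l v m =
     (if m \<in> box l then theta \<theta>0 h \<omega> (tot m) * v m
        + (\<Sum>p\<in>{1..length l}. if 0 < m ! (p - 1) then xi h \<omega> a l m p * v (unitsub m p) else 0)
      else 0)"
proof -
  have diagonal: "(\<Sum>n\<in>box l. v n * (theta \<theta>0 h \<omega> (tot n) * basisV l n m))
      = (if m \<in> box l then theta \<theta>0 h \<omega> (tot m) * v m else 0)"
  proof -
    have "(\<Sum>n\<in>box l. v n * (theta \<theta>0 h \<omega> (tot n) * basisV l n m))
        = (\<Sum>n\<in>box l. if n = m then theta \<theta>0 h \<omega> (tot m) * v m else 0)"
      by (intro sum.cong) (auto simp: basisV_def)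
    then show ?thesis
      using finite_box by simp
  qed
  have raising: "(\<Sum>n\<in>box l. v n * (xi h \<omega> a l (unitadd n p) p * basisV l (unitadd n p) m))
      = (if m \<in> box l \<and> 0 < m ! (p - 1) then xi h \<omega> a l m p * v (unitsub m p) else 0)"
    if "p \<in> {1..length l}" for p
  proof -
    have "(\<Sum>n\<in>box l. v n * (xi h \<omega> a l (unitadd n p) p * basisV l (unitadd n p) m))
        = (\<Sum>n\<in>box l. if n = unitsub m p
             then (if m \<in> box l \<and> 0 < m ! (p - 1) then xi h \<omega> a l m p * v (unitsub m p) else 0)
             else 0)"
      using that by (intro sum.cong) (auto simp: basisV_unitadd unitadd_unitsub box_def)
    then show ?thesis
      using finite_box unitsub_in_box[of m l p] by auto
  qed
  have "opA \<theta>0 h \<omega> a l v m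
      = (\<Sum>n\<in>box l. v n * (theta \<theta>0 h \<omega> (tot n) * basisV l n m))
        + (\<Sum>p\<in>{1..length l}. \<Sum>n\<in>box l.
             v n * (xi h \<omega> a l (unitadd n p) p * basisV l (unitadd n p) m))"
    unfolding opA_def A_basis_def
    by (simp only: distrib_left sum.distrib sum_distrib_left sum.swap[of _ "box l"])
  also have "\<dots> = (if m \<in> box l then theta \<theta>0 h \<omega> (tot m) * v m else 0)
        + (\<Sum>p\<in>{1..length l}. if m \<in> box l \<and> 0 < m ! (p - 1)
             then xi h \<omega> a l m p * v (unitsub m p) else 0)"
    by (simp only: diagonal raising cong: sum.cong)
  finally show ?thesis
    by simp
qed


section \<open>The coefficient identity\<close>

lemma of_nat_add_neq_0_if_notin_negrange:
  assumes "\<omega> \<notin> negrange k" "0 < i" "int i \<le> k"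
  shows "of_nat i + \<omega> \<noteq> 0"
proof
  assume "of_nat i + \<omega> = 0"
  then have "\<omega> = of_int (- int i)"
    by (simp add: eq_neg_iff_add_eq_0 add.commute)
  then have "\<omega> \<in> negrange k"
    using assms(2,3) unfolding negrange_def by (auto intro!: exI[of _ "- int i"])
  with assms(1) show False
    by contradiction
qed

definition alt_inv_pochhammer :: "'a::field \<Rightarrow> nat \<Rightarrow> 'a" where
  "alt_inv_pochhammer c k = (-1) ^ k / pochhammer c k"

lemma alt_inv_pochhammer_Suc:
  assumes "c + of_nat k \<noteq> 0"
  shows "alt_inv_pochhammer c k = - (c + of_nat k) * alt_inv_pochhammer c (Suc k)"
proof -
  have "(c + of_nat k) * alt_inv_pochhammer c (Suc k) = - alt_inv_pochhammer c k"
    using assms by (simp add: alt_inv_pochhammer_def pochhammer_rec')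
  then show ?thesis
    by (simp only: mult_minus_left) simp
qed

lemma pochhammer_Suc_shift_diff:
  fixes B D :: "'a::comm_ring_1"
  shows "(D + of_nat (Suc k)) * pochhammer B (Suc k) - D * pochhammer (B - 1) (Suc k)
       = of_nat (Suc k) * (D + B + of_nat k) * pochhammer B k"
proof -
  have "pochhammer B (Suc k) = (B + of_nat k) * pochhammer B k"
    by (rule pochhammer_rec')
  moreover have "pochhammer (B - 1) (Suc k) = (B - 1) * pochhammer B k"
    by (simp add: pochhammer_rec)
  ultimately show ?thesis
    by (simp only:) (simp add: algebra_simps)
qed


definition poch_base ::
    "complex \<Rightarrow> complex list \<Rightarrow> nat list \<Rightarrow> nat list \<Rightarrow> nat list \<Rightarrow> nat \<Rightarrow> complex" where
  "poch_base \<omega> a l x m q = of_nat (tsum m 1 (q - 1)) + of_nat (tsum x 1 q)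
     + of_nat (tsum l q (length l)) + a ! (q - 1) + \<omega> + 1"

(* For j = length l this is the q-th factor of coefC m x; lowering the bases after position j
   gives the factors of coefC (unitsub m p) x at positions q > p. *)
definition shifted_factor ::
    "complex \<Rightarrow> complex list \<Rightarrow> nat list \<Rightarrow> nat list \<Rightarrow> nat list \<Rightarrow> nat \<Rightarrow> nat \<Rightarrow> complex" where
  "shifted_factor \<omega> a l x m j q = of_nat (m ! (q - 1) choose x ! (q - 1))
     * pochhammer (poch_base \<omega> a l x m q - (if j < q then 1 else 0)) (m ! (q - 1) - x ! (q - 1))"

definition shifted_prod ::
    "complex \<Rightarrow> complex list \<Rightarrow> nat list \<Rightarrow> nat list \<Rightarrow> nat list \<Rightarrow> nat \<Rightarrow> complex" where
  "shifted_prod \<omega> a l x m j = (\<Prod>q\<in>{1..length l}. shifted_factor \<omega> a l x m j q)"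

definition lowering_potential ::
    "complex \<Rightarrow> complex list \<Rightarrow> nat list \<Rightarrow> nat list \<Rightarrow> nat list \<Rightarrow> nat \<Rightarrow> complex" where
  "lowering_potential \<omega> a l x m j =
     (of_nat (tsum m 1 j) - of_nat (tsum x 1 j)) * shifted_prod \<omega> a l x m j"

lemma coefC_eq_shifted_prod:
  "coefC \<omega> a l m x =
     alt_inv_pochhammer (2 * of_nat (tot x) + \<omega> + 1) (tot m - tot x) * shifted_prod \<omega> a l x m (length l)"
  unfolding coefC_def alt_inv_pochhammer_def shifted_prod_def shifted_factor_def poch_base_def
  by (auto intro!: prod.cong)

lemma shifted_prod_remove:
  assumes "p \<in> {1..length l}" "j \<in> {p - 1, p}"
  shows "shifted_prod \<omega> a l x m j
       = shifted_factor \<omega> a l x m j p * (\<Prod>q\<in>{1..length l} - {p}. shifted_factor \<omega> a l x m p q)"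
proof -
  have "(\<Prod>q\<in>{1..length l} - {p}. shifted_factor \<omega> a l x m j q)
      = (\<Prod>q\<in>{1..length l} - {p}. shifted_factor \<omega> a l x m p q)"
    using assms by (intro prod.cong) (auto simp: shifted_factor_def)
  then show ?thesis
    unfolding shifted_prod_def using assms(1) by (simp add: prod.remove)
qed

lemma coefC_unitsub:
  assumes "m \<in> box_from l x" "p \<in> {1..length l}" "x ! (p - 1) < m ! (p - 1)"
  shows "coefC \<omega> a l (unitsub m p) x
       = alt_inv_pochhammer (2 * of_nat (tot x) + \<omega> + 1) (tot m - tot x - 1)
         * (of_nat (m ! (p - 1) - 1 choose x ! (p - 1))
            * pochhammer (poch_base \<omega> a l x m p) (m ! (p - 1) - x ! (p - 1) - 1)
            * (\<Prod>q\<in>{1..length l} - {p}. shifted_factor \<omega> a l x m p q))"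
proof -
  have p: "p \<in> {1..length m}" "0 < m ! (p - 1)"
    using assms by (auto simp: box_from_def box_def)
  define factor where "factor q = of_nat (unitsub m p ! (q - 1) choose x ! (q - 1))
     * pochhammer (of_nat (tsum (unitsub m p) 1 (q - 1)) + of_nat (tsum x 1 q)
          + of_nat (tsum l q (length l)) + a ! (q - 1) + \<omega> + 1)
         (unitsub m p ! (q - 1) - x ! (q - 1))" for q
  have "factor p = of_nat (m ! (p - 1) - 1 choose x ! (p - 1))
      * pochhammer (poch_base \<omega> a l x m p) (m ! (p - 1) - x ! (p - 1) - 1)"
    using p of_nat_tsum_unitsub[OF p, of "p - 1", where 'a = complex]
    by (auto simp: factor_def nth_unitsub poch_base_def)
  moreover have "factor q = shifted_factor \<omega> a l x m p q" if "q \<in> {1..length l} - {p}" for q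
    using p that of_nat_tsum_unitsub[OF p, of "q - 1", where 'a = complex]
    by (auto simp: factor_def shifted_factor_def nth_unitsub poch_base_def add.assoc)
  ultimately have "(\<Prod>q\<in>{1..length l}. factor q)
      = of_nat (m ! (p - 1) - 1 choose x ! (p - 1))
        * pochhammer (poch_base \<omega> a l x m p) (m ! (p - 1) - x ! (p - 1) - 1)
        * (\<Prod>q\<in>{1..length l} - {p}. shifted_factor \<omega> a l x m p q)"
    using assms(2) by (simp add: prod.remove)
  moreover have "tot (unitsub m p) - tot x = tot m - tot x - 1"
    using tot_unitsub[OF p] by simp
  ultimately show ?thesis
    unfolding coefC_def alt_inv_pochhammer_def factor_def by simp
qed

lemma lowering_potential_eq:
  assumes "p \<in> {1..length l}" "x ! (p - 1) = m ! (p - 1)"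
  shows "lowering_potential \<omega> a l x m p = lowering_potential \<omega> a l x m (p - 1)"
proof -
  have "tsum n 1 p = tsum n 1 (p - 1) + n ! (p - 1)" for n
    using assms(1) tsum_Suc[of n "p - 1"] by simp
  then have "(of_nat (tsum m 1 p) :: complex) - of_nat (tsum x 1 p)
      = of_nat (tsum m 1 (p - 1)) - of_nat (tsum x 1 (p - 1))"
    using assms(2) by simp
  moreover have "shifted_prod \<omega> a l x m p = shifted_prod \<omega> a l x m (p - 1)"
    using assms shifted_prod_remove[OF assms(1)] by (simp add: shifted_factor_def)
  ultimately show ?thesis
    by (simp add: lowering_potential_def)
qed


lemma xi_mult_coefC_unitsub:
  assumes x: "x \<in> box l" and m: "m \<in> box_from l x" and p: "p \<in> {1..length l}"
    and lt: "x ! (p - 1) < m ! (p - 1)"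
    and W_nonzero: "of_nat (tot x) + of_nat (tot m) + \<omega> \<noteq> 0"
  shows "xi h \<omega> a l m p * coefC \<omega> a l (unitsub m p) x
       = - h * (of_nat (tot x) + of_nat (tot m) + \<omega>)
         * alt_inv_pochhammer (2 * of_nat (tot x) + \<omega> + 1) (tot m - tot x)
         * (lowering_potential \<omega> a l x m p - lowering_potential \<omega> a l x m (p - 1))"
proof -
  define c where "c = 2 * of_nat (tot x) + \<omega> + 1"
  define W where "W = of_nat (tot x) + of_nat (tot m) + \<omega>"
  obtain i where i: "p = Suc i"
    using p by (cases p) auto
  obtain d where d: "m ! i = x ! i + Suc d"
    using lt less_imp_Suc_add unfolding i by fastforce
  obtain k where k: "tot m = tot x + Suc k"
    using tot_less_tot_box_from[OF x m p lt] less_imp_Suc_add by fastforce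
  define M where "M = (of_nat (tsum m 1 i) :: complex)"
  define X where "X = (of_nat (tsum x 1 i) :: complex)"
  define E where "E = 2 * M + of_nat (m ! i) + of_nat (tsum l p (length l)) + a ! i + \<omega>"
  define B where "B = poch_base \<omega> a l x m p"
  define b where "b = (of_nat (m ! i choose x ! i) :: complex)"
  define R where "R = (\<Prod>q\<in>{1..length l} - {p}. shifted_factor \<omega> a l x m p q)"
  have sign: "alt_inv_pochhammer c k = - W * alt_inv_pochhammer c (Suc k)"
  proof -
    have "c + of_nat k = W"
      by (simp add: c_def W_def k)
    then show ?thesis
      using alt_inv_pochhammer_Suc[of c k] W_nonzero unfolding W_def by simp
  qed
  have coef: "coefC \<omega> a l (unitsub m p) x
      = alt_inv_pochhammer c k * (of_nat (m ! i - 1 choose x ! i) * pochhammer B d * R)"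
    using coefC_unitsub[OF m p lt, of \<omega> a] by (simp add: c_def B_def R_def i k d)
  have binom: "of_nat (m ! i - 1 choose x ! i) * of_nat (m ! i) = of_nat (Suc d) * b"
    using binomial_absorb_comp[of "m ! i" "x ! i"] unfolding b_def
    by (metis d add_diff_cancel_left' mult.commute of_nat_mult)
  have xi: "xi h \<omega> a l m p = h * E * of_nat (m ! i)"
    by (simp add: xi_def E_def M_def i add.assoc)
  have potential_p:
    "lowering_potential \<omega> a l x m p = (M - X + of_nat (Suc d)) * (b * pochhammer B (Suc d) * R)"
    using shifted_prod_remove[OF p, of p]
    by (simp add: lowering_potential_def shifted_factor_def M_def X_def B_def b_def R_def i d)
  have potential_p_minus_1:
    "lowering_potential \<omega> a l x m (p - 1) = (M - X) * (b * pochhammer (B - 1) (Suc d) * R)"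
    using shifted_prod_remove[OF p, of "p - 1"]
    by (simp add: lowering_potential_def shifted_factor_def M_def X_def B_def b_def R_def i d)
  have E: "M - X + B + of_nat d = E"
    by (simp add: B_def E_def M_def X_def poch_base_def i d)
  have "xi h \<omega> a l m p * coefC \<omega> a l (unitsub m p) x
      = - h * W * alt_inv_pochhammer c (Suc k) * R * E * pochhammer B d
        * (of_nat (m ! i - 1 choose x ! i) * of_nat (m ! i))"
    unfolding xi coef sign by (simp add: algebra_simps)
  also have "\<dots> = - h * W * alt_inv_pochhammer c (Suc k) * b * R * (of_nat (Suc d) * E * pochhammer B d)"
    unfolding binom by (simp add: algebra_simps)
  also have "\<dots> = - h * W * alt_inv_pochhammer c (Suc k) * b * R
      * ((M - X + of_nat (Suc d)) * pochhammer B (Suc d) - (M - X) * pochhammer (B - 1) (Suc d))"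
    unfolding pochhammer_Suc_shift_diff E ..
  also have "\<dots> = - h * W * alt_inv_pochhammer c (Suc k)
      * (lowering_potential \<omega> a l x m p - lowering_potential \<omega> a l x m (p - 1))"
    unfolding potential_p potential_p_minus_1 by (simp add: algebra_simps)
  finally show ?thesis
    by (simp add: W_def c_def k)
qed


lemma lowering_term_eq:
  assumes x: "x \<in> box l" and m: "m \<in> box_from l x" and p: "p \<in> {1..length l}"
    and \<omega>: "\<omega> \<notin> negrange (2 * int (tot l) - 1)"
  shows "(if x ! (p - 1) < m ! (p - 1) then xi h \<omega> a l m p * coefC \<omega> a l (unitsub m p) x else 0)
       = - h * (of_nat (tot x) + of_nat (tot m) + \<omega>)
         * alt_inv_pochhammer (2 * of_nat (tot x) + \<omega> + 1) (tot m - tot x)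
         * (lowering_potential \<omega> a l x m p - lowering_potential \<omega> a l x m (p - 1))"
proof (cases "x ! (p - 1) < m ! (p - 1)")
  case True
  have "tot m \<le> tot l"
    using m box_from_subset_box by (blast intro: tot_le_tot_box)
  moreover have "tot x < tot m"
    using tot_less_tot_box_from[OF x m p True] .
  ultimately have "of_nat (tot x + tot m) + \<omega> \<noteq> 0"
    by (intro of_nat_add_neq_0_if_notin_negrange[OF \<omega>]) auto
  then show ?thesis
    using xi_mult_coefC_unitsub[OF x m p True] True by simp
next
  case False
  then have "x ! (p - 1) = m ! (p - 1)"
    using m p by (auto simp: box_from_def intro: le_antisym)
  then show ?thesis
    using False lowering_potential_eq[OF p] by simp
qed

lemma lowering_sum_eq:
  assumes x: "x \<in> box l" and m: "m \<in> box_from l x"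
    and \<omega>: "\<omega> \<notin> negrange (2 * int (tot l) - 1)"
  shows "(\<Sum>p\<in>{1..length l}. if x ! (p - 1) < m ! (p - 1)
            then xi h \<omega> a l m p * coefC \<omega> a l (unitsub m p) x else 0)
       = (theta \<theta>0 h \<omega> (tot x) - theta \<theta>0 h \<omega> (tot m)) * coefC \<omega> a l m x"
proof -
  define W where "W = of_nat (tot x) + of_nat (tot m) + \<omega>"
  define s where "s = alt_inv_pochhammer (2 * of_nat (tot x) + \<omega> + 1) (tot m - tot x)"
  define F where "F = lowering_potential \<omega> a l x m"
  have lengths: "length x = length l" "length m = length l"
    using x m by (auto simp: box_from_def box_def)
  have "(\<Sum>p\<in>{1..length l}. if x ! (p - 1) < m ! (p - 1)
            then xi h \<omega> a l m p * coefC \<omega> a l (unitsub m p) x else 0)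
      = (\<Sum>p\<in>{1..length l}. - h * W * s * (F p - F (p - 1)))"
    using lowering_term_eq[OF x m _ \<omega>] by (simp add: W_def s_def F_def)
  also have "\<dots> = - h * W * s * (F (length l) - F 0)"
    unfolding sum_distrib_left[symmetric] using sum_telescope''[of 0 "length l" F] by simp
  also have "\<dots> = - h * W * (of_nat (tot m) - of_nat (tot x)) * coefC \<omega> a l m x"
    by (simp add: F_def lowering_potential_def coefC_eq_shifted_prod s_def tot_def lengths)
  also have "\<dots> = (theta \<theta>0 h \<omega> (tot x) - theta \<theta>0 h \<omega> (tot m)) * coefC \<omega> a l m x"
    by (simp add: W_def theta_def algebra_simps)
  finally show ?thesis .
qed

lemma Vx_unitsub:
  assumes "m \<in> box l" "p \<in> {1..length l}"
  shows "(if 0 < m ! (p - 1) then c * Vx \<omega> a l x (unitsub m p) else 0)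
       = (if m \<in> box_from l x \<and> x ! (p - 1) < m ! (p - 1) then c * coefC \<omega> a l (unitsub m p) x else 0)"
  using assms by (auto simp: Vx_apply unitsub_in_box_from_iff)

theorem mainTheorem2:
  fixes l x :: "nat list" and \<theta>0 h hs \<omega> \<omega>s :: complex and a :: "complex list"
  assumes "standing l h hs \<omega> \<omega>s a"
    and "x \<in> box l"
  shows "opA \<theta>0 h \<omega> a l (Vx \<omega> a l x) = (\<lambda>m. theta \<theta>0 h \<omega> (tot x) * Vx \<omega> a l x m)"
proof
  fix m
  have \<omega>: "\<omega> \<notin> negrange (2 * int (tot l) - 1)"
    using assms(1) by (simp add: standing_def)
  show "opA \<theta>0 h \<omega> a l (Vx \<omega> a l x) m = theta \<theta>0 h \<omega> (tot x) * Vx \<omega> a l x m"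
  proof (cases "m \<in> box l")
    case False
    then show ?thesis
      using box_from_subset_box by (auto simp: opA_apply Vx_apply)
  next
    case True
    have "(\<Sum>p\<in>{1..length l}. if 0 < m ! (p - 1) then xi h \<omega> a l m p * Vx \<omega> a l x (unitsub m p) else 0)
        = (\<Sum>p\<in>{1..length l}. if m \<in> box_from l x \<and> x ! (p - 1) < m ! (p - 1)
             then xi h \<omega> a l m p * coefC \<omega> a l (unitsub m p) x else 0)"
      by (rule sum.cong[OF refl]) (rule Vx_unitsub[OF True])
    also have "\<dots> = (if m \<in> box_from l x
        then (theta \<theta>0 h \<omega> (tot x) - theta \<theta>0 h \<omega> (tot m)) * coefC \<omega> a l m x else 0)"
      using lowering_sum_eq[OF assms(2) _ \<omega>] by simp
    finally show ?thesis
      using True by (simp add: opA_apply Vx_apply algebra_simps)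
  qed
qed

end
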